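(* Let $0<\phi<\pi/6$, $T>0$, and let $g(y,t)=x^{-\beta}y^{-\delta}$ where $x=t+(3y/2)^{2/3}$, with $\beta>0$ and $\frac23\beta+\delta>0$. Then for any $p\in\mathcal S_\phi$ and $t\in[0,T]$, $$|G(p,t)|\le C|p|^{\frac23\beta+\delta-1},$$ where $G=\mathcal L^{-1}g$ and $C$ is independent of $\nu$ and $T$ but may depend on $\beta$ and $\delta$. If in addition $\frac23\beta+\delta>1$, then for $\nu>1$, $$\|G\|_\nu\le C\nu^{-\frac23\beta-\delta+1}.$$
   Context: Powers use principal branches and $\arg$ is the principal argument; $y$ ranges over a sector $|\arg y|<\pi/2+\phi'$ ($\phi<\phi'<\pi/6$), $|y|$ large. $\mathcal S_\phi=\{p:\arg p\in(-\phi,\phi),0<|p|<\infty\}$. $\mathcal L^{-1}g(p,t)=\frac1{2\pi i}\int_{\mathcal C}e^{py}g(y,t)dy$ with $\mathcal C=\{c+ire^{i\phi'\mathrm{sgn}(r)}:r\in\mathbb R\}$, $c>0$, traversed with $r$ increasing. With $\mathcal K=\overline{\mathcal S_\phi}\times[0,T]$, $\|G\|_\nu=M_0\sup_{\mathcal K}(1+|p|^2)e^{-\nu|p|}|G(p,t)|$, $M_0=\sup_{s\ge0}\frac{2(1+s^2)(\ln(1+s^2)+s\arctan s)}{s(s^2+4)}$. *)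

theory Defs
  imports "HOL-Analysis.Analysis"
begin

definition Sphi :: "real \<Rightarrow> complex set" where
  "Sphi \<phi> = {p. p \<noteq> 0 \<and> - \<phi> < Arg p \<and> Arg p < \<phi>}"

definition gfun :: "real \<Rightarrow> real \<Rightarrow> complex \<Rightarrow> real \<Rightarrow> complex" where
  "gfun \<beta> \<delta> y t =
     (complex_of_real t + (3 * y / 2) powr (2/3)) powr (- complex_of_real \<beta>)
       * y powr (- complex_of_real \<delta>)"

definition contour :: "real \<Rightarrow> real \<Rightarrow> real \<Rightarrow> complex" where
  "contour c \<phi>' r = complex_of_real c + \<i> * complex_of_real r * exp (\<i> * complex_of_real (\<phi>' * sgn r))"

text \<open>Inverse Laplace transform (1/(2 pi i)) int_C e^(py) g(y,t) dy, written via the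
  parametrisation, dy = i e^(i phi' sgn r) dr.\<close>
definition invLap :: "real \<Rightarrow> real \<Rightarrow> (complex \<Rightarrow> real \<Rightarrow> complex) \<Rightarrow> complex \<Rightarrow> real \<Rightarrow> complex" where
  "invLap c \<phi>' g p t =
     (1 / (2 * complex_of_real pi * \<i>)) *
       integral UNIV (\<lambda>r::real. exp (p * contour c \<phi>' r) * g (contour c \<phi>' r) t
                                  * (\<i> * exp (\<i> * complex_of_real (\<phi>' * sgn r))))"

definition M0 :: real where
  "M0 = Sup {2 * (1 + s\<^sup>2) * (ln (1 + s\<^sup>2) + s * arctan s) / (s * (s\<^sup>2 + 4)) | s::real. s \<ge> 0}"

definition norm_nu :: "real \<Rightarrow> real \<Rightarrow> real \<Rightarrow> (complex \<Rightarrow> real \<Rightarrow> complex) \<Rightarrow> real" where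
  "norm_nu \<phi> T \<nu> G = M0 * Sup {(1 + (cmod p)\<^sup>2) * exp (- \<nu> * cmod p) * cmod (G p t)
                                   | p t. p \<in> closure (Sphi \<phi>) \<and> t \<in> {0..T}}"

end

theory Submission
  imports Defs "HOL-Complex_Analysis.Cauchy_Integral_Theorem"
begin

(*
  The inverse Laplace integral does not depend on the abscissa c > 0: the integrand is holomorphic
  on the slit plane, so it has a primitive there, and two contours differ by the primitive taken at
  the ends of the horizontal segments joining them, which tends to 0.  On the contour
  |y| >= cos phi' * max c |r| and |arg y| <= 2 pi / 3, hence |arg (3y/2)^(2/3)| <= 4 pi / 9 and
  |g(y,t)| <= K |y|^(-a) with a = 2 beta / 3 + delta; for p in the sector,
  Re (p y) <= c |p| - |r| |p| sin (phi' - phi).  Moving the contour to c = 1/|p| and integrating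
  gives |G(p,t)| <= C |p|^(a - 1).  If a > 1, letting c tend to infinity at p = 0 gives G(0,t) = 0,
  and the bound on the nu-norm follows from x^b e^(-nu x) <= (b/nu)^b.
*)

lemma Re_powr_of_real:
  fixes z :: complex
  assumes "z \<noteq> 0"
  shows "Re (z powr of_real a) = norm z powr a * cos (a * Arg z)"
  using assms by (simp add: powr_def Re_exp Arg_eq_Im_Ln)

lemma Im_powr_of_real:
  fixes z :: complex
  assumes "z \<noteq> 0"
  shows "Im (z powr of_real a) = norm z powr a * sin (a * Arg z)"
  using assms by (simp add: powr_def Im_exp Arg_eq_Im_Ln)

lemma powr_of_real_not_nonpos_Reals:
  fixes z :: complex
  assumes z: "z \<notin> \<real>\<^sub>\<le>\<^sub>0" and a: "0 \<le> a" "a < 1"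
  shows "z powr of_real a \<notin> \<real>\<^sub>\<le>\<^sub>0"
proof
  assume nonpos: "z powr of_real a \<in> \<real>\<^sub>\<le>\<^sub>0"
  have "z \<noteq> 0" using z by auto
  then have pos: "norm z powr a > 0" by simp
  have bound: "\<bar>a * Arg z\<bar> < pi"
  proof -
    have "\<bar>a * Arg z\<bar> \<le> a * pi"
      using Arg_bounded[of z] a by (simp add: abs_mult mult_left_mono abs_le_iff)
    also have "\<dots> < pi" using a by simp
    finally show ?thesis .
  qed
  have "sin (a * Arg z) = 0"
    using nonpos pos Im_powr_of_real[OF \<open>z \<noteq> 0\<close>] by (simp add: complex_nonpos_Reals_iff)
  then have "a * Arg z = 0" by (rule sin_eq_0_pi[rotated 2]) (use bound in linarith)+
  then have "Re (z powr of_real a) > 0"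
    by (simp only: Re_powr_of_real[OF \<open>z \<noteq> 0\<close>] cos_zero mult_1_right pos)
  with nonpos show False by (simp add: complex_nonpos_Reals_iff)
qed

lemma cos_mult_norm_powr_le_Re_powr:
  fixes z :: complex
  assumes "z \<noteq> 0" "\<bar>Arg z\<bar> \<le> \<theta>" "0 \<le> a" "a * \<theta> \<le> pi"
  shows "cos (a * \<theta>) * norm z powr a \<le> Re (z powr of_real a)"
proof -
  have "\<bar>a * Arg z\<bar> \<le> a * \<theta>" using assms by (simp add: abs_mult mult_left_mono)
  then have "cos (a * \<theta>) \<le> cos \<bar>a * Arg z\<bar>" using assms by (subst cos_mono_le_eq) auto
  then have "cos (a * \<theta>) \<le> cos (a * Arg z)" by simp
  then have "cos (a * \<theta>) * norm z powr a \<le> cos (a * Arg z) * norm z powr a"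
    by (rule mult_right_mono) simp
  then show ?thesis by (simp add: Re_powr_of_real[OF assms(1)] mult.commute)
qed

lemma abs_Arg_le_two_thirds_pi:
  fixes z :: complex
  assumes "z \<noteq> 0" "- norm z / 2 \<le> Re z"
  shows "\<bar>Arg z\<bar> \<le> 2 * pi / 3"
proof -
  have "- 1 / 2 \<le> cos (Arg z)" using assms by (simp add: cos_Arg field_simps)
  then have "cos (2 * pi / 3) \<le> cos \<bar>Arg z\<bar>" by (simp add: cos_120)
  then show ?thesis using Arg_bounded[of z] by (subst (asm) cos_mono_le_eq) auto
qed

lemma gfun_holomorphic:
  assumes "0 \<le> t"
  shows "(\<lambda>y. gfun \<beta> \<delta> y t) holomorphic_on - \<real>\<^sub>\<le>\<^sub>0"
proof -
  have "of_real t + (3 * y / 2) powr (2/3) \<notin> \<real>\<^sub>\<le>\<^sub>0" if "y \<notin> \<real>\<^sub>\<le>\<^sub>0" for y :: complex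
  proof -
    have "3 * y / 2 \<notin> \<real>\<^sub>\<le>\<^sub>0" using that by (auto simp: complex_nonpos_Reals_iff)
    then have "(3 * y / 2) powr of_real (2/3) \<notin> \<real>\<^sub>\<le>\<^sub>0"
      by (rule powr_of_real_not_nonpos_Reals) auto
    then show ?thesis using assms by (auto simp: complex_nonpos_Reals_iff)
  qed
  then show ?thesis
    unfolding gfun_def by (intro holomorphic_intros) (auto simp: complex_nonpos_Reals_iff)
qed

definition gfun_const :: "real \<Rightarrow> real" where
  "gfun_const \<beta> = (cos (4 * pi / 9) * (3/2) powr (2/3)) powr (- \<beta>)"

lemma gfun_const_pos: "0 < gfun_const \<beta>"
  using cos_gt_zero_pi[of "4 * pi / 9"] by (simp add: gfun_const_def)

lemma norm_gfun_le:
  fixes y :: complex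
  assumes y: "y \<noteq> 0" "- norm y / 2 \<le> Re y" and "0 \<le> t" "0 \<le> \<beta>"
  shows "norm (gfun \<beta> \<delta> y t) \<le> gfun_const \<beta> * norm y powr (- (2/3 * \<beta> + \<delta>))"
proof -
  define z where "z = 3 * y / 2"
  define L where "L = cos (4 * pi / 9) * (3/2) powr (2/3) * norm y powr (2/3)"
  have z: "z \<noteq> 0" "- norm z / 2 \<le> Re z" using y by (auto simp: z_def norm_divide norm_mult)
  have "L = cos (2/3 * (2 * pi / 3)) * norm z powr (2/3)"
    by (simp add: L_def z_def norm_mult norm_divide powr_mult powr_divide)
  also have "\<dots> \<le> Re (z powr of_real (2/3))"
    using z abs_Arg_le_two_thirds_pi[OF z] by (intro cos_mult_norm_powr_le_Re_powr) auto
  also have "\<dots> \<le> Re (of_real t + z powr (2/3))" using assms by simp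
  also have "\<dots> \<le> norm (of_real t + z powr (2/3))" by (rule complex_Re_le_cmod)
  finally have L_le: "L \<le> norm (of_real t + z powr (2/3))" .
  have "L > 0"
    using y cos_gt_zero_pi[of "4 * pi / 9"] by (simp add: L_def)
  have "norm (gfun \<beta> \<delta> y t) = norm (of_real t + z powr (2/3)) powr (- \<beta>) * norm y powr (- \<delta>)"
    by (simp add: gfun_def z_def norm_mult norm_powr_real_powr')
  also have "\<dots> \<le> L powr (- \<beta>) * norm y powr (- \<delta>)"
    using L_le \<open>L > 0\<close> assms by (intro mult_right_mono powr_mono2') auto
  also have "\<dots> = gfun_const \<beta> * norm y powr (- (2/3 * \<beta> + \<delta>))"
    by (simp add: gfun_const_def L_def powr_mult powr_powr powr_add[symmetric] algebra_simps)
  finally show ?thesis .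
qed

lemma Re_contour: "Re (contour c \<phi>' r) = c - \<bar>r\<bar> * sin \<phi>'"
  by (cases "r > 0"; cases "r < 0") (auto simp: contour_def Re_exp Im_exp)

lemma Im_contour: "Im (contour c \<phi>' r) = r * cos \<phi>'"
  by (cases "r > 0"; cases "r < 0") (auto simp: contour_def Re_exp Im_exp)

lemma contour_nonneg:
  "0 \<le> r \<Longrightarrow> contour c \<phi>' r = of_real c + of_real r * (\<i> * exp (\<i> * of_real \<phi>'))"
  by (cases "r = 0") (auto simp: contour_def)

lemma contour_nonpos:
  "r \<le> 0 \<Longrightarrow> contour c \<phi>' r = of_real c + of_real r * (\<i> * exp (- (\<i> * of_real \<phi>')))"
  by (cases "r = 0") (auto simp: contour_def)

lemma norm_contour_diff: "norm (contour c1 \<phi>' r - contour c2 \<phi>' r) = \<bar>c1 - c2\<bar>"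
  by (simp add: contour_def flip: of_real_diff)

lemma closed_segment_contour:
  "closed_segment (contour c1 \<phi>' r) (contour c2 \<phi>' r) = (\<lambda>c. contour c \<phi>' r) ` closed_segment c1 c2"
proof -
  define w where "w = \<i> * of_real r * exp (\<i> * of_real (\<phi>' * sgn r))"
  have "contour c \<phi>' r = w + of_real c" for c by (simp add: contour_def w_def)
  then show ?thesis by (simp add: closed_segment_translation closed_segment_of_real image_image)
qed

lemma contour_not_nonpos_Reals:
  assumes "0 < c" "\<bar>\<phi>'\<bar> < pi / 2"
  shows "contour c \<phi>' r \<notin> \<real>\<^sub>\<le>\<^sub>0"
proof (cases "r = 0")
  case True
  then show ?thesis using assms by (simp add: complex_nonpos_Reals_iff Re_contour)
next
  case False
  have "cos \<phi>' > 0" using assms by (intro cos_gt_zero_pi) auto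
  then show ?thesis using False by (simp add: complex_nonpos_Reals_iff Im_contour)
qed

(* c * cos phi' is the distance from 0 to the lines carrying the two halves of the contour. *)
lemma cos_mult_max_le_norm_contour:
  assumes "0 \<le> c" "0 \<le> cos \<phi>'"
  shows "cos \<phi>' * max c \<bar>r\<bar> \<le> norm (contour c \<phi>' r)"
proof -
  define y where "y = contour c \<phi>' r"
  have Im_y: "\<bar>Im y\<bar> = \<bar>r\<bar> * cos \<phi>'" using assms by (simp add: y_def Im_contour abs_mult)
  have "cos \<phi>' * \<bar>r\<bar> \<le> norm y" using Im_y abs_Im_le_cmod[of y] by (simp add: mult.commute)
  moreover have "cos \<phi>' * c \<le> norm y"
  proof (rule power2_le_imp_le)
    have "cos \<phi>' * c = Re y * cos \<phi>' + \<bar>Im y\<bar> * sin \<phi>'"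
      unfolding Im_y by (simp add: y_def Re_contour algebra_simps)
    also have "\<dots>\<^sup>2 = ((Re y)\<^sup>2 + \<bar>Im y\<bar>\<^sup>2) * ((sin \<phi>')\<^sup>2 + (cos \<phi>')\<^sup>2)
                       - (Re y * sin \<phi>' - \<bar>Im y\<bar> * cos \<phi>')\<^sup>2"
      by algebra
    also have "\<dots> \<le> (norm y)\<^sup>2" by (simp add: cmod_power2)
    finally show "(cos \<phi>' * c)\<^sup>2 \<le> (norm y)\<^sup>2" .
  qed simp
  ultimately show ?thesis using assms by (simp add: y_def max_mult_distrib_left)
qed

(* That is, |Arg y| <= 2 pi / 3 on the contour; this is where phi' <= pi / 6 is needed. *)
lemma Re_contour_ge_half_norm:
  assumes "0 \<le> c" "0 \<le> \<phi>'" "\<phi>' \<le> pi / 6"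
  shows "- norm (contour c \<phi>' r) / 2 \<le> Re (contour c \<phi>' r)"
proof (cases "0 \<le> Re (contour c \<phi>' r)")
  case True
  then show ?thesis using norm_ge_zero[of "contour c \<phi>' r"] by linarith
next
  case False
  define X where "X = - Re (contour c \<phi>' r)"
  have "0 < X" "X \<le> \<bar>r\<bar> * sin \<phi>'" using False assms by (auto simp: X_def Re_contour)
  have "sin \<phi>' \<le> 1 / 2"
    using assms sin_mono_le_eq[of \<phi>' "pi / 6"] by (simp add: sin_30)
  then have "(sin \<phi>')\<^sup>2 \<le> (1 / 2)\<^sup>2"
    using assms sin_ge_zero[of \<phi>'] pi_gt_zero by (intro power_mono) auto
  then have "3 * (sin \<phi>')\<^sup>2 \<le> (cos \<phi>')\<^sup>2"
    using sin_cos_squared_add[of \<phi>'] by (simp add: power_divide del: sin_cos_squared_add)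
  have "X\<^sup>2 \<le> (\<bar>r\<bar> * sin \<phi>')\<^sup>2"
    using \<open>0 < X\<close> \<open>X \<le> \<bar>r\<bar> * sin \<phi>'\<close> by (intro power_mono) auto
  then have "(2 * X)\<^sup>2 \<le> X\<^sup>2 + 3 * (\<bar>r\<bar> * sin \<phi>')\<^sup>2"
    by (simp add: power_mult_distrib)
  also have "\<dots> \<le> X\<^sup>2 + (r * cos \<phi>')\<^sup>2"
    using mult_left_mono[OF \<open>3 * (sin \<phi>')\<^sup>2 \<le> (cos \<phi>')\<^sup>2\<close>, of "r\<^sup>2"]
    by (simp add: power_mult_distrib)
  also have "\<dots> = (norm (contour c \<phi>' r))\<^sup>2" by (simp add: cmod_power2 X_def Im_contour)
  finally have "2 * X \<le> norm (contour c \<phi>' r)" by (rule power2_le_imp_le) simp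
  then show ?thesis by (simp add: X_def)
qed

lemma closure_Sphi_subset_cone:
  assumes "\<phi> \<le> pi"
  shows "closure (Sphi \<phi>) \<subseteq> {p. cos \<phi> * norm p \<le> Re p}"
proof (rule closure_minimal)
  show "Sphi \<phi> \<subseteq> {p. cos \<phi> * norm p \<le> Re p}"
  proof
    fix p assume "p \<in> Sphi \<phi>"
    then have "p \<noteq> 0" "\<bar>Arg p\<bar> < \<phi>" by (auto simp: Sphi_def)
    then have "cos \<phi> \<le> cos \<bar>Arg p\<bar>" using assms by (subst cos_mono_le_eq) auto
    then show "p \<in> {p. cos \<phi> * norm p \<le> Re p}" using \<open>p \<noteq> 0\<close> by (simp add: cos_Arg field_simps)
  qed
  show "closed {p::complex. cos \<phi> * norm p \<le> Re p}"
    by (intro closed_Collect_le continuous_intros)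
qed

lemma abs_Im_le_sin_mult_norm:
  assumes "0 \<le> \<phi>" "\<phi> \<le> pi / 2" "cos \<phi> * norm p \<le> Re p"
  shows "\<bar>Im p\<bar> \<le> sin \<phi> * norm p"
proof (rule power2_le_imp_le)
  have "(cos \<phi> * norm p)\<^sup>2 \<le> (Re p)\<^sup>2" using assms cos_ge_zero[of \<phi>] by (intro power_mono) auto
  then show "\<bar>Im p\<bar>\<^sup>2 \<le> (sin \<phi> * norm p)\<^sup>2"
    using cmod_power2[of p] by (simp add: power_mult_distrib sin_squared_eq algebra_simps)
  show "0 \<le> sin \<phi> * norm p" using assms by (simp add: sin_ge_zero)
qed

lemma Re_mult_contour_le:
  assumes "0 \<le> \<phi>" "\<phi> \<le> pi / 2" "0 \<le> \<phi>'" "\<phi>' \<le> pi / 2" "0 \<le> c"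
    and p: "cos \<phi> * norm p \<le> Re p"
  shows "Re (p * contour c \<phi>' r) \<le> c * norm p - \<bar>r\<bar> * norm p * sin (\<phi>' - \<phi>)"
proof -
  have sc: "0 \<le> sin \<phi>'" "0 \<le> cos \<phi>'" using assms by (auto intro!: sin_ge_zero cos_ge_zero)
  have "Re p * c \<le> norm p * c" using assms complex_Re_le_cmod by (intro mult_right_mono) auto
  moreover have "\<bar>r\<bar> * sin \<phi>' * (cos \<phi> * norm p) \<le> \<bar>r\<bar> * sin \<phi>' * Re p"
    using p sc by (intro mult_left_mono) auto
  moreover have "- (Im p * (r * cos \<phi>')) \<le> \<bar>Im p\<bar> * (\<bar>r\<bar> * cos \<phi>')"
    using sc abs_ge_minus_self[of "Im p * (r * cos \<phi>')"] by (simp add: abs_mult)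
  moreover have "\<bar>Im p\<bar> * (\<bar>r\<bar> * cos \<phi>') \<le> sin \<phi> * norm p * (\<bar>r\<bar> * cos \<phi>')"
    using assms sc abs_Im_le_sin_mult_norm by (intro mult_right_mono) auto
  moreover have "Re (p * contour c \<phi>' r) = Re p * c - \<bar>r\<bar> * sin \<phi>' * Re p - Im p * (r * cos \<phi>')"
    by (simp add: Re_contour Im_contour algebra_simps)
  moreover have "c * norm p - \<bar>r\<bar> * norm p * sin (\<phi>' - \<phi>)
      = norm p * c - \<bar>r\<bar> * sin \<phi>' * (cos \<phi> * norm p) + sin \<phi> * norm p * (\<bar>r\<bar> * cos \<phi>')"
    by (simp add: sin_diff algebra_simps)
  ultimately show ?thesis by linarith
qed

lemma norm_gfun_contour_le:
  assumes "0 \<le> \<phi>'" "\<phi>' \<le> pi / 6" "0 < c" "0 \<le> t" "0 \<le> \<beta>" "0 \<le> 2/3 * \<beta> + \<delta>"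
  shows "norm (gfun \<beta> \<delta> (contour c \<phi>' r) t) \<le> gfun_const \<beta> * (cos \<phi>' * max c \<bar>r\<bar>) powr (- (2/3 * \<beta> + \<delta>))"
proof -
  have "0 < cos \<phi>'" by (intro cos_gt_zero_pi) (use assms pi_gt_zero in linarith)+
  then have pos: "0 < cos \<phi>' * max c \<bar>r\<bar>" using assms by simp
  also have le_norm: "\<dots> \<le> norm (contour c \<phi>' r)"
    using assms \<open>0 < cos \<phi>'\<close> by (intro cos_mult_max_le_norm_contour) auto
  finally have "contour c \<phi>' r \<noteq> 0" by auto
  then have "norm (gfun \<beta> \<delta> (contour c \<phi>' r) t) \<le> gfun_const \<beta> * norm (contour c \<phi>' r) powr (- (2/3 * \<beta> + \<delta>))"
    using assms by (intro norm_gfun_le Re_contour_ge_half_norm) auto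
  also have "\<dots> \<le> gfun_const \<beta> * (cos \<phi>' * max c \<bar>r\<bar>) powr (- (2/3 * \<beta> + \<delta>))"
    using pos le_norm assms gfun_const_pos[of \<beta>] by (intro mult_left_mono powr_mono2') auto
  finally show ?thesis .
qed

lemma norm_exp_mult_gfun_contour_le:
  assumes "0 \<le> \<phi>" "\<phi> \<le> pi / 2" "0 \<le> \<phi>'" "\<phi>' \<le> pi / 6" "0 < c"
    and "cos \<phi> * norm p \<le> Re p" "0 \<le> t" "0 \<le> \<beta>" "0 \<le> 2/3 * \<beta> + \<delta>"
  shows "norm (exp (p * contour c \<phi>' r) * gfun \<beta> \<delta> (contour c \<phi>' r) t)
           \<le> exp (c * norm p - \<bar>r\<bar> * norm p * sin (\<phi>' - \<phi>)) * gfun_const \<beta>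
              * (cos \<phi>' * max c \<bar>r\<bar>) powr (- (2/3 * \<beta> + \<delta>))"
proof -
  have "\<phi>' \<le> pi / 2" using assms pi_gt_zero by linarith
  then have "Re (p * contour c \<phi>' r) \<le> c * norm p - \<bar>r\<bar> * norm p * sin (\<phi>' - \<phi>)"
    using assms by (intro Re_mult_contour_le) auto
  then have "norm (exp (p * contour c \<phi>' r)) \<le> exp (c * norm p - \<bar>r\<bar> * norm p * sin (\<phi>' - \<phi>))"
    by simp
  with norm_gfun_contour_le[of \<phi>' c t \<beta> \<delta> r] assms show ?thesis
    unfolding norm_mult mult.assoc by (intro mult_mono) auto
qed

lemma integral_symmetric_interval_even:
  fixes g :: "real \<Rightarrow> real"
  assumes "\<And>x. g (- x) = g x" "0 \<le> K" "g integrable_on {0..K}"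
  shows "integral {-K..K} g = 2 * integral {0..K} g"
proof -
  have right: "(g has_integral integral {0..K} g) {0..K}" using assms(3) by (rule integrable_integral)
  then have "((\<lambda>x. g (- x)) has_integral integral {0..K} g) {-K..-0}"
    by (simp only: has_integral_reflect_real)
  then have "(g has_integral integral {0..K} g) {-K..0}" using assms(1) by simp
  from has_integral_combine[OF _ _ this right] assms(2) show ?thesis
    by (simp add: integral_unique)
qed

lemma nonneg_integrable_on_UNIV_symmetric_bound:
  fixes g :: "real \<Rightarrow> real"
  assumes nonneg: "\<And>x. 0 \<le> g x" and cont: "continuous_on UNIV g"
    and bound: "\<And>K. R \<le> K \<Longrightarrow> integral {-K..K} g \<le> M"
  shows "g integrable_on UNIV" "integral UNIV g \<le> M"
proof -
  define f where "f = (\<lambda>k::nat. \<lambda>x. if x \<in> {-real k..real k} then g x else 0)"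
  have int: "g integrable_on {a..b}" for a b
    using cont by (intro integrable_continuous_interval) (auto intro: continuous_on_subset)
  have le_M: "integral {-real k..real k} g \<le> M" for k
  proof -
    have "integral {-real k..real k} g \<le> integral {-max R (real k) .. max R (real k)} g"
      using int nonneg by (intro integral_subset_le) auto
    also have "\<dots> \<le> M" by (rule bound) simp
    finally show ?thesis .
  qed
  have f_int: "f k integrable_on UNIV" for k
    unfolding f_def integrable_restrict_UNIV by (rule int)
  have f_integral: "integral UNIV (f k) = integral {-real k..real k} g" for k
    unfolding f_def integral_restrict_UNIV ..
  have "f k x \<le> f (Suc k) x" for k x
    unfolding f_def using nonneg[of x] by auto
  moreover have "(\<lambda>k. f k x) \<longlonglongrightarrow> g x" for x
  proof (rule tendsto_eventually)
    obtain n :: nat where n: "\<bar>x\<bar> \<le> real n" using real_arch_simple by blast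
    show "\<forall>\<^sub>F k in sequentially. f k x = g x"
      using eventually_ge_at_top[of n] by eventually_elim (use n in \<open>auto simp: f_def\<close>)
  qed
  moreover have "bounded (range (\<lambda>k. integral UNIV (f k)))"
  proof -
    have "\<bar>integral UNIV (f k)\<bar> \<le> M" for k
      unfolding f_integral using le_M[of k] integral_nonneg[OF int] nonneg by (simp add: abs_le_iff)
    then show ?thesis by (auto simp: bounded_iff)
  qed
  ultimately have "g integrable_on UNIV \<and> (\<lambda>k. integral UNIV (f k)) \<longlonglongrightarrow> integral UNIV g"
    using f_int by (intro monotone_convergence_increasing) auto
  then show "g integrable_on UNIV" "integral UNIV g \<le> M"
    using le_M f_integral by (auto intro: LIMSEQ_le_const2)
qed

lemma exp_minus_abs_integrable_and_bound:
  fixes \<kappa> :: real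
  assumes "0 < \<kappa>"
  shows "(\<lambda>r. exp (- \<kappa> * \<bar>r\<bar>)) integrable_on UNIV"
    and "integral UNIV (\<lambda>r. exp (- \<kappa> * \<bar>r\<bar>)) \<le> 2 / \<kappa>"
proof -
  have cont: "continuous_on UNIV (\<lambda>r. exp (- \<kappa> * \<bar>r\<bar>))" by (intro continuous_intros)
  have half_line: "((\<lambda>r. exp (- \<kappa> * r)) has_integral 1 / \<kappa>) {0..}"
    using has_integral_exp_minus_to_infinity[OF assms, of 0] by simp
  have bound: "integral {-K..K} (\<lambda>r. exp (- \<kappa> * \<bar>r\<bar>)) \<le> 2 / \<kappa>" if "0 \<le> K" for K
  proof -
    have "integral {-K..K} (\<lambda>r. exp (- \<kappa> * \<bar>r\<bar>)) = 2 * integral {0..K} (\<lambda>r. exp (- \<kappa> * r))"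
      using that integrable_continuous_interval[OF continuous_on_subset[OF cont]]
      by (subst integral_symmetric_interval_even) (auto intro!: integral_cong)
    also have "integral {0..K} (\<lambda>r. exp (- \<kappa> * r)) \<le> integral {0..} (\<lambda>r. exp (- \<kappa> * r))"
      using half_line by (intro integral_subset_le integrable_continuous_interval continuous_intros)
                          (auto simp: integrable_on_def)
    finally show ?thesis using half_line by (simp add: integral_unique)
  qed
  show "(\<lambda>r. exp (- \<kappa> * \<bar>r\<bar>)) integrable_on UNIV"
    and "integral UNIV (\<lambda>r. exp (- \<kappa> * \<bar>r\<bar>)) \<le> 2 / \<kappa>"
    using nonneg_integrable_on_UNIV_symmetric_bound[OF _ cont bound] by auto
qed

lemma max_abs_powr_integrable_and_bound:
  fixes a c :: real
  assumes "1 < a" "0 < c"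
  shows "(\<lambda>r. max c \<bar>r\<bar> powr (- a)) integrable_on UNIV"
    and "integral UNIV (\<lambda>r. max c \<bar>r\<bar> powr (- a)) \<le> 2 * a / (a - 1) * c powr (1 - a)"
proof -
  have cont: "continuous_on UNIV (\<lambda>r. max c \<bar>r\<bar> powr (- a))"
    using assms by (intro continuous_intros) auto
  then have int: "(\<lambda>r. max c \<bar>r\<bar> powr (- a)) integrable_on {u..v}" for u v
    by (intro integrable_continuous_interval) (auto intro: continuous_on_subset)
  have half_line: "((\<lambda>r. r powr (- a)) has_integral c powr (1 - a) / (a - 1)) {c..}"
    using has_integral_powr_to_inf[of "- a" c] assms by (simp add: minus_divide_right add.commute)
  have bound: "integral {-K..K} (\<lambda>r. max c \<bar>r\<bar> powr (- a)) \<le> 2 * a / (a - 1) * c powr (1 - a)"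
    if "c \<le> K" for K
  proof -
    have "integral {0..c} (\<lambda>r. max c \<bar>r\<bar> powr (- a)) = integral {0..c} (\<lambda>_. c powr (- a))"
      by (rule integral_cong) auto
    also have "\<dots> = c powr (1 - a)" using assms powr_add[of c 1 "- a"] by simp
    finally have head: "integral {0..c} (\<lambda>r. max c \<bar>r\<bar> powr (- a)) = c powr (1 - a)" .
    have tail: "integral {c..K} (\<lambda>r. max c \<bar>r\<bar> powr (- a)) \<le> c powr (1 - a) / (a - 1)"
    proof -
      have "integral {c..K} (\<lambda>r. max c \<bar>r\<bar> powr (- a)) = integral {c..K} (\<lambda>r. r powr (- a))"
        using assms by (intro integral_cong) auto
      also have "\<dots> \<le> integral {c..} (\<lambda>r. r powr (- a))"
        using half_line assms by (intro integral_subset_le integrable_continuous_interval continuous_intros)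
                                 (auto simp: integrable_on_def)
      finally show ?thesis using half_line by (simp add: integral_unique)
    qed
    have "integral {-K..K} (\<lambda>r. max c \<bar>r\<bar> powr (- a))
        = 2 * (integral {0..c} (\<lambda>r. max c \<bar>r\<bar> powr (- a)) + integral {c..K} (\<lambda>r. max c \<bar>r\<bar> powr (- a)))"
      using that assms int Henstock_Kurzweil_Integration.integral_combine[of 0 c K, OF _ _ int]
      by (simp add: integral_symmetric_interval_even)
    also have "\<dots> \<le> 2 * (c powr (1 - a) + c powr (1 - a) / (a - 1))" using head tail by simp
    also have "\<dots> = 2 * a / (a - 1) * c powr (1 - a)" using assms by (simp add: field_simps)
    finally show ?thesis .
  qed
  show "(\<lambda>r. max c \<bar>r\<bar> powr (- a)) integrable_on UNIV"
    and "integral UNIV (\<lambda>r. max c \<bar>r\<bar> powr (- a)) \<le> 2 * a / (a - 1) * c powr (1 - a)"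
    using nonneg_integrable_on_UNIV_symmetric_bound[OF _ cont bound] by auto
qed

definition contour_integrand :: "(complex \<Rightarrow> complex) \<Rightarrow> real \<Rightarrow> real \<Rightarrow> real \<Rightarrow> complex" where
  "contour_integrand f c \<phi>' r = f (contour c \<phi>' r) * (\<i> * exp (\<i> * of_real (\<phi>' * sgn r)))"

lemma invLap_eq_integral_contour_integrand:
  "invLap c \<phi>' g p t
     = 1 / (2 * of_real pi * \<i>) * integral UNIV (contour_integrand (\<lambda>y. exp (p * y) * g y t) c \<phi>')"
  by (simp only: invLap_def contour_integrand_def[abs_def])

lemma norm_contour_integrand [simp]: "norm (contour_integrand f c \<phi>' r) = norm (f (contour c \<phi>' r))"
  by (simp add: contour_integrand_def norm_mult)

lemma slit_plane_primitive:
  assumes "f holomorphic_on - \<real>\<^sub>\<le>\<^sub>0"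
  obtains F where "\<And>y. y \<notin> \<real>\<^sub>\<le>\<^sub>0 \<Longrightarrow> (F has_field_derivative f y) (at y)"
proof -
  have "\<real>\<^sub>\<le>\<^sub>0 = complex_of_real ` {..0}" by (auto simp: nonpos_Reals_def)
  then have "starlike (- \<real>\<^sub>\<le>\<^sub>0 :: complex set)"
    using starlike_slotted_complex_plane_left[of 0] by simp
  moreover have "open (- \<real>\<^sub>\<le>\<^sub>0 :: complex set)" by (simp add: open_Compl)
  ultimately obtain F where "\<forall>y \<in> - \<real>\<^sub>\<le>\<^sub>0. (F has_field_derivative f y) (at y)"
    using holomorphic_starlike_primitive[of "- \<real>\<^sub>\<le>\<^sub>0" f "{}"] assms
      holomorphic_on_imp_continuous_on holomorphic_on_imp_differentiable_at by blast
  then show ?thesis using that by auto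
qed

lemma has_integral_primitive_on_line:
  fixes f F :: "complex \<Rightarrow> complex"
  assumes "a \<le> b"
    and F: "\<And>r. r \<in> {a..b} \<Longrightarrow> (F has_field_derivative f (z + of_real r * w)) (at (z + of_real r * w))"
  shows "((\<lambda>r. f (z + of_real r * w) * w) has_integral F (z + of_real b * w) - F (z + of_real a * w)) {a..b}"
proof -
  have "((\<lambda>r. F (z + of_real r * w)) has_vector_derivative f (z + of_real r * w) * w)
      (at r within {a..b})" if "r \<in> {a..b}" for r
  proof -
    have "((\<lambda>x. z + x * w) has_field_derivative w) (at (of_real r))"
      by (auto intro!: derivative_eq_intros)
    from DERIV_chain2[OF F[OF that] this]
    show ?thesis by (rule has_vector_derivative_real_field)
  qed
  from fundamental_theorem_of_calculus[of a b "\<lambda>r. F (z + of_real r * w)", OF \<open>a \<le> b\<close> this]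
  show ?thesis by simp
qed

lemma has_integral_contour_integrand:
  assumes F: "\<And>y. y \<notin> \<real>\<^sub>\<le>\<^sub>0 \<Longrightarrow> (F has_field_derivative f y) (at y)"
    and "0 < c" "\<bar>\<phi>'\<bar> < pi / 2" "0 \<le> R"
  shows "(contour_integrand f c \<phi>' has_integral F (contour c \<phi>' R) - F (contour c \<phi>' (- R))) {-R..R}"
proof -
  define w_pos where "w_pos = \<i> * exp (\<i> * of_real \<phi>')"
  define w_neg where "w_neg = \<i> * exp (- (\<i> * of_real \<phi>'))"
  have F_contour: "(F has_field_derivative f (contour c \<phi>' r)) (at (contour c \<phi>' r))" for r
    using assms by (intro F contour_not_nonpos_Reals)
  have line_pos: "((\<lambda>r. f (of_real c + of_real r * w_pos) * w_pos) has_integral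
          F (of_real c + of_real R * w_pos) - F (of_real c + of_real 0 * w_pos)) {0..R}"
    using \<open>0 \<le> R\<close> F_contour
    by (intro has_integral_primitive_on_line) (auto simp: w_pos_def simp flip: contour_nonneg)
  (* sgn 0 = 0, so at r = 0 the contour integrand differs from the straight-line one *)
  have upper: "(contour_integrand f c \<phi>' has_integral F (contour c \<phi>' R) - F (contour c \<phi>' 0)) {0..R}"
    using \<open>0 \<le> R\<close> unfolding contour_nonneg[OF \<open>0 \<le> R\<close>] contour_nonneg[OF order_refl]
    by (intro has_integral_spike_finite[of "{0}", OF _ _ line_pos[unfolded w_pos_def]])
       (auto simp: w_pos_def contour_nonneg contour_integrand_def)
  have line_neg: "((\<lambda>r. f (of_real c + of_real r * w_neg) * w_neg) has_integral
          F (of_real c + of_real 0 * w_neg) - F (of_real c + of_real (- R) * w_neg)) {-R..0}"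
    using \<open>0 \<le> R\<close> F_contour
    by (intro has_integral_primitive_on_line) (auto simp: w_neg_def simp flip: contour_nonpos)
  have "- R \<le> 0" using \<open>0 \<le> R\<close> by simp
  have lower: "(contour_integrand f c \<phi>' has_integral F (contour c \<phi>' 0) - F (contour c \<phi>' (- R))) {-R..0}"
    using \<open>0 \<le> R\<close> unfolding contour_nonpos[OF \<open>- R \<le> 0\<close>] contour_nonpos[OF order_refl]
    by (intro has_integral_spike_finite[of "{0}", OF _ _ line_neg[unfolded w_neg_def]])
       (auto simp: w_neg_def contour_nonpos contour_integrand_def)
  from has_integral_combine[OF _ _ lower upper] \<open>0 \<le> R\<close> show ?thesis by simp
qed

lemma tendsto_integral_symmetric_interval:
  fixes g :: "real \<Rightarrow> 'a::banach"
  assumes "g integrable_on UNIV"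
  shows "((\<lambda>R. integral {-R..R} g) \<longlongrightarrow> integral UNIV g) at_top"
proof (rule tendstoI)
  fix e :: real assume "0 < e"
  then have "\<exists>B>0. \<forall>a b. ball 0 B \<subseteq> {a..b} \<longrightarrow> norm (integral {a..b} g - integral UNIV g) < e"
    using has_integral_alt'[of g "integral UNIV g" UNIV] integrable_integral[OF assms] by auto
  then obtain B where "\<And>a b. ball 0 B \<subseteq> {a..b} \<Longrightarrow> norm (integral {a..b} g - integral UNIV g) < e"
    by blast
  moreover have "ball 0 B \<subseteq> {-R..R}" if "B \<le> R" for R :: real
    using that by (auto simp: dist_real_def)
  ultimately show "\<forall>\<^sub>F R in at_top. dist (integral {-R..R} g) (integral UNIV g) < e"
    unfolding eventually_at_top_linorder by (intro exI[of _ B]) (auto simp: dist_norm)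
qed

lemma contour_integrand_integrable_on_UNIV:
  assumes "f holomorphic_on - \<real>\<^sub>\<le>\<^sub>0" "0 < c" "\<bar>\<phi>'\<bar> < pi / 2"
    and "B integrable_on UNIV" "\<And>r. norm (f (contour c \<phi>' r)) \<le> B r"
  shows "contour_integrand f c \<phi>' integrable_on UNIV"
proof (rule integrable_on_all_intervals_integrable_bound)
  obtain F where "\<And>y. y \<notin> \<real>\<^sub>\<le>\<^sub>0 \<Longrightarrow> (F has_field_derivative f y) (at y)"
    using slit_plane_primitive[OF assms(1)] by blast
  then have symmetric: "contour_integrand f c \<phi>' integrable_on {-R..R}" if "0 \<le> R" for R
    using has_integral_contour_integrand assms that by blast
  have "contour_integrand f c \<phi>' integrable_on {a..b}" for a b
    by (rule integrable_subinterval_real[OF symmetric[of "max \<bar>a\<bar> \<bar>b\<bar>"]]) auto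
  then show "(\<lambda>x. if x \<in> UNIV then contour_integrand f c \<phi>' x else 0) integrable_on cbox a b" for a b
    by simp
qed (use assms in auto)

lemma norm_primitive_contour_diff_le:
  assumes F: "\<And>y. y \<notin> \<real>\<^sub>\<le>\<^sub>0 \<Longrightarrow> (F has_field_derivative f y) (at y)"
    and "0 < c1" "0 < c2" "\<bar>\<phi>'\<bar> < pi / 2"
    and bound: "\<And>c. c \<in> closed_segment c1 c2 \<Longrightarrow> norm (f (contour c \<phi>' r)) \<le> M"
  shows "norm (F (contour c1 \<phi>' r) - F (contour c2 \<phi>' r)) \<le> M * \<bar>c1 - c2\<bar>"
proof -
  have pos: "0 < c" if "c \<in> closed_segment c1 c2" for c
    using that assms by (auto simp: closed_segment_eq_real_ivl split: if_splits)
  let ?S = "closed_segment (contour c1 \<phi>' r) (contour c2 \<phi>' r)"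
  have "norm (F (contour c1 \<phi>' r) - F (contour c2 \<phi>' r)) \<le> M * norm (contour c1 \<phi>' r - contour c2 \<phi>' r)"
  proof (rule field_differentiable_bound[OF convex_closed_segment])
    show "(F has_field_derivative f z) (at z within ?S)" "norm (f z) \<le> M" if "z \<in> ?S" for z
      using that bound F[OF contour_not_nonpos_Reals[OF pos \<open>\<bar>\<phi>'\<bar> < pi / 2\<close>]]
      by (auto simp: closed_segment_contour intro: has_field_derivative_at_within)
  qed auto
  then show ?thesis by (simp add: norm_contour_diff)
qed

lemma contour_integral_shift:
  assumes f: "f holomorphic_on - \<real>\<^sub>\<le>\<^sub>0" and c: "0 < c1" "0 < c2" and \<phi>': "\<bar>\<phi>'\<bar> < pi / 2"
    and int: "contour_integrand f c1 \<phi>' integrable_on UNIV" "contour_integrand f c2 \<phi>' integrable_on UNIV"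
    and decay: "\<forall>\<^sub>F r in at_infinity. \<forall>c\<in>closed_segment c1 c2. norm (f (contour c \<phi>' r)) \<le> M r"
      "(M \<longlongrightarrow> 0) at_infinity"
  shows "integral UNIV (contour_integrand f c1 \<phi>') = integral UNIV (contour_integrand f c2 \<phi>')"
proof -
  obtain F where F: "\<And>y. y \<notin> \<real>\<^sub>\<le>\<^sub>0 \<Longrightarrow> (F has_field_derivative f y) (at y)"
    using slit_plane_primitive[OF f] by blast
  define D where "D r = F (contour c1 \<phi>' r) - F (contour c2 \<phi>' r)" for r
  have "\<forall>\<^sub>F r in at_infinity. norm (D r) \<le> M r * \<bar>c1 - c2\<bar>"
    using decay(1) by eventually_elim (auto simp: D_def intro!: norm_primitive_contour_diff_le[OF F c \<phi>'])
  moreover have "((\<lambda>r. M r * \<bar>c1 - c2\<bar>) \<longlongrightarrow> 0) at_infinity"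
    using tendsto_mult_left_zero[OF decay(2)] .
  ultimately have "(D \<longlongrightarrow> 0) at_infinity" by (rule Lim_null_comparison)
  then have "(D \<longlongrightarrow> 0) at_top" "((\<lambda>R. D (- R)) \<longlongrightarrow> 0) at_top"
    using tendsto_mono[OF at_top_le_at_infinity] tendsto_mono[OF at_bot_le_at_infinity]
    by (auto simp flip: filterlim_at_bot_mirror)
  then have "((\<lambda>R. D R - D (- R)) \<longlongrightarrow> 0) at_top"
    using tendsto_diff by fastforce
  moreover have "\<forall>\<^sub>F R in at_top. D R - D (- R)
      = integral {-R..R} (contour_integrand f c1 \<phi>') - integral {-R..R} (contour_integrand f c2 \<phi>')"
    using eventually_ge_at_top[of 0]
  proof eventually_elim
    case (elim R)
    then show ?case
      using has_integral_contour_integrand[OF F c(1) \<phi>' elim] has_integral_contour_integrand[OF F c(2) \<phi>' elim]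
      by (simp add: D_def integral_unique)
  qed
  ultimately have "((\<lambda>R. integral {-R..R} (contour_integrand f c1 \<phi>') - integral {-R..R} (contour_integrand f c2 \<phi>'))
      \<longlongrightarrow> 0) at_top"
    by (rule Lim_transform_eventually)
  moreover have "((\<lambda>R. integral {-R..R} (contour_integrand f c1 \<phi>') - integral {-R..R} (contour_integrand f c2 \<phi>'))
      \<longlongrightarrow> integral UNIV (contour_integrand f c1 \<phi>') - integral UNIV (contour_integrand f c2 \<phi>')) at_top"
    using int by (intro tendsto_diff tendsto_integral_symmetric_interval)
  ultimately show ?thesis
    using tendsto_unique[OF trivial_limit_at_top_linorder] by fastforce
qed

lemma norm_invLap_le_integral:
  assumes "(\<lambda>y. exp (p * y) * g y t) holomorphic_on - \<real>\<^sub>\<le>\<^sub>0" "0 < c" "\<bar>\<phi>'\<bar> < pi / 2"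
    and "B integrable_on UNIV" "\<And>r. norm (exp (p * contour c \<phi>' r) * g (contour c \<phi>' r) t) \<le> B r"
  shows "norm (invLap c \<phi>' g p t) \<le> integral UNIV B / (2 * pi)"
proof -
  have "norm (integral UNIV (contour_integrand (\<lambda>y. exp (p * y) * g y t) c \<phi>')) \<le> integral UNIV B"
    using assms by (intro integral_norm_bound_integral contour_integrand_integrable_on_UNIV) auto
  then show ?thesis
    by (simp add: invLap_eq_integral_contour_integrand norm_mult norm_divide divide_simps)
qed

lemma exp_mult_gfun_holomorphic: "0 \<le> t \<Longrightarrow> (\<lambda>y. exp (p * y) * gfun \<beta> \<delta> y t) holomorphic_on - \<real>\<^sub>\<le>\<^sub>0"
  by (intro holomorphic_intros gfun_holomorphic)

lemma norm_exp_mult_gfun_contour_le_abs: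
  assumes "0 \<le> \<phi>" "\<phi> \<le> \<phi>'" "\<phi>' \<le> pi / 6" "0 < c" "r \<noteq> 0"
    and "cos \<phi> * norm p \<le> Re p" "0 \<le> t" "0 \<le> \<beta>" "0 \<le> 2/3 * \<beta> + \<delta>"
  shows "norm (exp (p * contour c \<phi>' r) * gfun \<beta> \<delta> (contour c \<phi>' r) t)
           \<le> exp (c * norm p) * gfun_const \<beta> * (cos \<phi>' * \<bar>r\<bar>) powr (- (2/3 * \<beta> + \<delta>))"
proof -
  have "0 < cos \<phi>'" by (intro cos_gt_zero_pi) (use assms pi_gt_zero in linarith)+
  have "0 \<le> sin (\<phi>' - \<phi>)" by (rule sin_ge_zero) (use assms pi_gt_zero in linarith)+
  then have "exp (c * norm p - \<bar>r\<bar> * norm p * sin (\<phi>' - \<phi>)) \<le> exp (c * norm p)" by simp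
  moreover have "(cos \<phi>' * max c \<bar>r\<bar>) powr (- (2/3 * \<beta> + \<delta>)) \<le> (cos \<phi>' * \<bar>r\<bar>) powr (- (2/3 * \<beta> + \<delta>))"
    using \<open>0 < cos \<phi>'\<close> assms by (intro powr_mono2') auto
  moreover have "\<phi> \<le> pi / 2" using assms pi_gt_zero by linarith
  then have "norm (exp (p * contour c \<phi>' r) * gfun \<beta> \<delta> (contour c \<phi>' r) t)
      \<le> exp (c * norm p - \<bar>r\<bar> * norm p * sin (\<phi>' - \<phi>)) * gfun_const \<beta>
         * (cos \<phi>' * max c \<bar>r\<bar>) powr (- (2/3 * \<beta> + \<delta>))"
    using assms by (intro norm_exp_mult_gfun_contour_le) auto
  ultimately show ?thesis
    using gfun_const_pos[of \<beta>] by (smt (verit) mult_mono mult_nonneg_nonneg exp_ge_zero powr_ge_zero)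
qed

lemma invLap_gfun_indep_of_abscissa:
  assumes \<phi>: "0 \<le> \<phi>" "\<phi> \<le> \<phi>'" "\<phi>' \<le> pi / 6" and c: "0 < c1" "0 < c2"
    and "cos \<phi> * norm p \<le> Re p" and "0 \<le> t" "0 \<le> \<beta>" "0 < 2/3 * \<beta> + \<delta>"
    and int: "contour_integrand (\<lambda>y. exp (p * y) * gfun \<beta> \<delta> y t) c1 \<phi>' integrable_on UNIV"
      "contour_integrand (\<lambda>y. exp (p * y) * gfun \<beta> \<delta> y t) c2 \<phi>' integrable_on UNIV"
  shows "invLap c1 \<phi>' (gfun \<beta> \<delta>) p t = invLap c2 \<phi>' (gfun \<beta> \<delta>) p t"
proof -
  define a where "a = 2/3 * \<beta> + \<delta>"
  define M where "M r = exp (max c1 c2 * norm p) * gfun_const \<beta> * (cos \<phi>' * \<bar>r\<bar>) powr (- a)" for r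
  have "0 < cos \<phi>'" by (intro cos_gt_zero_pi) (use \<phi> pi_gt_zero in linarith)+
  have "norm (exp (p * contour c \<phi>' r) * gfun \<beta> \<delta> (contour c \<phi>' r) t) \<le> M r"
    if "c \<in> closed_segment c1 c2" "r \<noteq> 0" for c r
  proof -
    have "0 < c" "c \<le> max c1 c2"
      using that c by (auto simp: closed_segment_eq_real_ivl split: if_splits)
    then have "exp (c * norm p) \<le> exp (max c1 c2 * norm p)" by (simp add: mult_right_mono)
    with norm_exp_mult_gfun_contour_le_abs[of \<phi> \<phi>' c r p t \<beta> \<delta>] show ?thesis
      using assms \<open>0 < c\<close> that gfun_const_pos[of \<beta>]
      unfolding M_def a_def by (smt (verit) mult_right_mono mult_nonneg_nonneg powr_ge_zero)
  qed
  moreover have "\<forall>\<^sub>F r in at_infinity. (r::real) \<noteq> 0"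
    unfolding eventually_at_infinity by (intro exI[of _ 1]) auto
  ultimately have "\<forall>\<^sub>F r in at_infinity. \<forall>c\<in>closed_segment c1 c2.
      norm (exp (p * contour c \<phi>' r) * gfun \<beta> \<delta> (contour c \<phi>' r) t) \<le> M r"
    by (auto elim: eventually_mono)
  moreover have "(M \<longlongrightarrow> 0) at_infinity"
  proof -
    have "filterlim (\<lambda>r::real. \<bar>r\<bar>) at_top at_infinity"
      using filterlim_at_infinity_imp_norm_at_top[OF filterlim_ident[of "at_infinity :: real filter"]]
      by (simp add: real_norm_def[abs_def])
    then have "filterlim (\<lambda>r::real. cos \<phi>' * \<bar>r\<bar>) at_top at_infinity"
      using \<open>0 < cos \<phi>'\<close> by (intro filterlim_tendsto_pos_mult_at_top[OF tendsto_const])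
    then have "((\<lambda>r. (cos \<phi>' * \<bar>r\<bar>) powr (- a)) \<longlongrightarrow> 0) at_infinity"
      using assms by (intro tendsto_neg_powr) (auto simp: a_def)
    then show ?thesis unfolding M_def by (intro tendsto_mult_right_zero)
  qed
  moreover have "\<bar>\<phi>'\<bar> < pi / 2" using \<phi> pi_gt_zero by linarith
  ultimately show ?thesis
    unfolding invLap_eq_integral_contour_integrand
    using contour_integral_shift[OF exp_mult_gfun_holomorphic[OF \<open>0 \<le> t\<close>] c _ int] by simp
qed

lemma norm_exp_mult_gfun_contour_le_exp:
  assumes "0 \<le> \<phi>" "\<phi> \<le> pi / 2" "0 \<le> \<phi>'" "\<phi>' \<le> pi / 6" "0 < c"
    and "cos \<phi> * norm p \<le> Re p" "0 \<le> t" "0 \<le> \<beta>" "0 \<le> 2/3 * \<beta> + \<delta>"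
  shows "norm (exp (p * contour c \<phi>' r) * gfun \<beta> \<delta> (contour c \<phi>' r) t)
           \<le> exp (c * norm p) * gfun_const \<beta> * (cos \<phi>' * c) powr (- (2/3 * \<beta> + \<delta>))
              * exp (- (norm p * sin (\<phi>' - \<phi>)) * \<bar>r\<bar>)"
proof -
  have "0 < cos \<phi>'" by (intro cos_gt_zero_pi) (use assms pi_gt_zero in linarith)+
  have "norm (exp (p * contour c \<phi>' r) * gfun \<beta> \<delta> (contour c \<phi>' r) t)
      \<le> exp (c * norm p - \<bar>r\<bar> * norm p * sin (\<phi>' - \<phi>)) * gfun_const \<beta>
         * (cos \<phi>' * max c \<bar>r\<bar>) powr (- (2/3 * \<beta> + \<delta>))"
    using assms by (rule norm_exp_mult_gfun_contour_le)
  also have "\<dots> \<le> exp (c * norm p - \<bar>r\<bar> * norm p * sin (\<phi>' - \<phi>)) * gfun_const \<beta>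
         * (cos \<phi>' * c) powr (- (2/3 * \<beta> + \<delta>))"
    using \<open>0 < cos \<phi>'\<close> assms gfun_const_pos[of \<beta>] by (intro mult_left_mono powr_mono2') auto
  finally show ?thesis by (simp add: exp_diff exp_minus field_simps)
qed

lemma norm_invLap_gfun_le:
  assumes \<phi>: "0 \<le> \<phi>" "\<phi> < \<phi>'" "\<phi>' \<le> pi / 6" and "0 < c"
    and p: "p \<noteq> 0" "cos \<phi> * norm p \<le> Re p" and "0 \<le> t" "0 \<le> \<beta>" "0 < 2/3 * \<beta> + \<delta>"
  shows "norm (invLap c \<phi>' (gfun \<beta> \<delta>) p t)
           \<le> exp 1 * gfun_const \<beta> * cos \<phi>' powr (- (2/3 * \<beta> + \<delta>)) / (pi * sin (\<phi>' - \<phi>))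
              * norm p powr (2/3 * \<beta> + \<delta> - 1)"
proof -
  define a where "a = 2/3 * \<beta> + \<delta>"
  define \<kappa> where "\<kappa> = norm p * sin (\<phi>' - \<phi>)"
  define E where "E c = exp (c * norm p) * gfun_const \<beta> * (cos \<phi>' * c) powr (- a)" for c
  (* at this abscissa the bound exp (c |p|) c^(-a) / |p| scales like |p|^(a - 1) *)
  define c' where "c' = 1 / norm p"
  have "0 < c'" using p by (simp add: c'_def)
  have "0 < cos \<phi>'" "\<bar>\<phi>'\<bar> < pi / 2" "\<phi> \<le> pi / 2" by (intro cos_gt_zero_pi) (use \<phi> pi_gt_zero in linarith)+
  have "0 < sin (\<phi>' - \<phi>)" by (intro sin_gt_zero) (use \<phi> pi_gt_zero in linarith)+
  then have "0 < \<kappa>" using p by (simp add: \<kappa>_def)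
  have bound: "norm (exp (p * contour c \<phi>' r) * gfun \<beta> \<delta> (contour c \<phi>' r) t) \<le> E c * exp (- \<kappa> * \<bar>r\<bar>)"
    if "0 < c" for c r
    unfolding E_def \<kappa>_def a_def using assms that \<open>\<phi> \<le> pi / 2\<close> by (intro norm_exp_mult_gfun_contour_le_exp) auto
  have dominant: "(\<lambda>r. E c * exp (- \<kappa> * \<bar>r\<bar>)) integrable_on UNIV" for c
    using integrable_on_cmult_left[OF exp_minus_abs_integrable_and_bound(1)[OF \<open>0 < \<kappa>\<close>]] by simp
  have integrable: "contour_integrand (\<lambda>y. exp (p * y) * gfun \<beta> \<delta> y t) c \<phi>' integrable_on UNIV"
    if "0 < c" for c
    using exp_mult_gfun_holomorphic[OF \<open>0 \<le> t\<close>] that \<open>\<bar>\<phi>'\<bar> < pi / 2\<close> dominant bound[OF that]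
    by (rule contour_integrand_integrable_on_UNIV)
  have "invLap c \<phi>' (gfun \<beta> \<delta>) p t = invLap c' \<phi>' (gfun \<beta> \<delta>) p t"
    using assms \<open>0 < c'\<close> integrable by (intro invLap_gfun_indep_of_abscissa) auto
  then have "norm (invLap c \<phi>' (gfun \<beta> \<delta>) p t) \<le> integral UNIV (\<lambda>r. E c' * exp (- \<kappa> * \<bar>r\<bar>)) / (2 * pi)"
    using norm_invLap_le_integral[where g = "gfun \<beta> \<delta>", OF exp_mult_gfun_holomorphic[OF \<open>0 \<le> t\<close>]
        \<open>0 < c'\<close> \<open>\<bar>\<phi>'\<bar> < pi / 2\<close> dominant bound[OF \<open>0 < c'\<close>]] by simp
  also have "\<dots> = E c' * integral UNIV (\<lambda>r. exp (- \<kappa> * \<bar>r\<bar>)) / (2 * pi)" by simp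
  also have "\<dots> \<le> E c' * (2 / \<kappa>) / (2 * pi)"
    using exp_minus_abs_integrable_and_bound(2)[OF \<open>0 < \<kappa>\<close>] gfun_const_pos[of \<beta>]
    by (intro divide_right_mono mult_left_mono) (auto simp: E_def)
  also have "\<dots> = exp 1 * gfun_const \<beta> * cos \<phi>' powr (- a) / (pi * sin (\<phi>' - \<phi>)) * norm p powr (a - 1)"
    using p \<open>0 < cos \<phi>'\<close>
    by (simp add: E_def c'_def \<kappa>_def powr_divide powr_minus_divide powr_diff field_simps)
  finally show ?thesis by (simp add: a_def)
qed

lemma invLap_gfun_at_zero:
  assumes \<phi>': "0 \<le> \<phi>'" "\<phi>' \<le> pi / 6" and "0 < c" "0 \<le> t" "0 \<le> \<beta>" "1 < 2/3 * \<beta> + \<delta>"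
  shows "invLap c \<phi>' (gfun \<beta> \<delta>) 0 t = 0"
proof -
  define a where "a = 2/3 * \<beta> + \<delta>"
  define E where "E = gfun_const \<beta> * cos \<phi>' powr (- a)"
  have "0 < cos \<phi>'" "\<bar>\<phi>'\<bar> < pi / 2" by (intro cos_gt_zero_pi) (use \<phi>' pi_gt_zero in linarith)+
  have bound: "norm (exp (0 * contour c' \<phi>' r) * gfun \<beta> \<delta> (contour c' \<phi>' r) t) \<le> E * max c' \<bar>r\<bar> powr (- a)"
    if "0 < c'" for c' r
    using norm_gfun_contour_le[of \<phi>' c' t \<beta> \<delta> r] \<open>0 < cos \<phi>'\<close> assms that
    by (simp add: E_def a_def powr_mult mult.assoc)
  have dominant: "(\<lambda>r. E * max c' \<bar>r\<bar> powr (- a)) integrable_on UNIV" if "0 < c'" for c'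
    using integrable_on_cmult_left[OF max_abs_powr_integrable_and_bound(1)[of a c'], of E] assms that
    by (simp add: a_def)
  have integrable: "contour_integrand (\<lambda>y. exp (0 * y) * gfun \<beta> \<delta> y t) c' \<phi>' integrable_on UNIV"
    if "0 < c'" for c'
    using exp_mult_gfun_holomorphic[OF \<open>0 \<le> t\<close>] that \<open>\<bar>\<phi>'\<bar> < pi / 2\<close> dominant[OF that] bound[OF that]
    by (rule contour_integrand_integrable_on_UNIV)
  have upper: "norm (invLap c \<phi>' (gfun \<beta> \<delta>) 0 t) \<le> E * a / ((a - 1) * pi) * c' powr (1 - a)"
    if "0 < c'" for c'
  proof -
    have "invLap c \<phi>' (gfun \<beta> \<delta>) 0 t = invLap c' \<phi>' (gfun \<beta> \<delta>) 0 t"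
      using assms that integrable by (intro invLap_gfun_indep_of_abscissa[where \<phi> = 0]) auto
    then have "norm (invLap c \<phi>' (gfun \<beta> \<delta>) 0 t) \<le> integral UNIV (\<lambda>r. E * max c' \<bar>r\<bar> powr (- a)) / (2 * pi)"
      using norm_invLap_le_integral[where g = "gfun \<beta> \<delta>", OF exp_mult_gfun_holomorphic[OF \<open>0 \<le> t\<close>]
          that \<open>\<bar>\<phi>'\<bar> < pi / 2\<close> dominant[OF that] bound[OF that]] by simp
    also have "\<dots> = E * integral UNIV (\<lambda>r. max c' \<bar>r\<bar> powr (- a)) / (2 * pi)" by simp
    also have "\<dots> \<le> E * (2 * a / (a - 1) * c' powr (1 - a)) / (2 * pi)"
      using max_abs_powr_integrable_and_bound(2)[of a c'] assms that gfun_const_pos[of \<beta>]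
      by (intro divide_right_mono mult_left_mono) (auto simp: a_def E_def)
    also have "\<dots> = E * a / ((a - 1) * pi) * c' powr (1 - a)" by simp
    finally show ?thesis .
  qed
  have "((\<lambda>c'. E * a / ((a - 1) * pi) * c' powr (1 - a)) \<longlongrightarrow> 0) at_top"
    using assms by (intro tendsto_mult_right_zero tendsto_neg_powr filterlim_ident) (auto simp: a_def)
  moreover have "\<forall>\<^sub>F c' in at_top. norm (invLap c \<phi>' (gfun \<beta> \<delta>) 0 t) \<le> E * a / ((a - 1) * pi) * c' powr (1 - a)"
    using eventually_gt_at_top[of 0] by (rule eventually_mono) (rule upper)
  ultimately have "norm (invLap c \<phi>' (gfun \<beta> \<delta>) 0 t) \<le> 0"
    by (rule tendsto_lowerbound) simp
  then show ?thesis by simp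
qed

lemma norm_invLap_gfun_le_on_closure_Sphi:
  assumes \<phi>: "0 \<le> \<phi>" "\<phi> < \<phi>'" "\<phi>' \<le> pi / 6" and "0 < c" "0 \<le> t" "0 \<le> \<beta>" "0 < 2/3 * \<beta> + \<delta>"
    and p: "p \<in> closure (Sphi \<phi>)" "p \<noteq> 0 \<or> 1 < 2/3 * \<beta> + \<delta>"
  shows "norm (invLap c \<phi>' (gfun \<beta> \<delta>) p t)
           \<le> exp 1 * gfun_const \<beta> * cos \<phi>' powr (- (2/3 * \<beta> + \<delta>)) / (pi * sin (\<phi>' - \<phi>))
              * norm p powr (2/3 * \<beta> + \<delta> - 1)"
proof (cases "p = 0")
  case True
  then show ?thesis using invLap_gfun_at_zero[of \<phi>' c t \<beta> \<delta>] assms by simp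
next
  case False
  have "\<phi> \<le> pi" using \<phi> pi_gt_zero by linarith
  with p have "cos \<phi> * norm p \<le> Re p" using closure_Sphi_subset_cone by blast
  with False show ?thesis using assms by (intro norm_invLap_gfun_le) auto
qed

lemma powr_mult_exp_le:
  fixes b \<nu> x :: real
  assumes "0 < b" "0 < \<nu>" "0 \<le> x"
  shows "x powr b * exp (- \<nu> * x) \<le> (b / \<nu>) powr b"
proof -
  have "\<nu> * x / b \<le> exp (\<nu> * x / b)" using exp_ge_add_one_self[of "\<nu> * x / b"] by linarith
  then have "x \<le> b / \<nu> * exp (\<nu> * x / b)" using assms by (simp add: field_simps)
  then have "x powr b \<le> (b / \<nu> * exp (\<nu> * x / b)) powr b" using assms by (intro powr_mono2) auto
  also have "\<dots> = (b / \<nu>) powr b * exp (\<nu> * x / b) powr b" by (rule powr_mult)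
  also have "exp (\<nu> * x / b) powr b = exp (\<nu> * x)" using assms by (simp add: powr_def)
  finally show ?thesis by (simp add: exp_minus field_simps)
qed

lemma one_plus_square_mult_exp_mult_powr_le:
  fixes a \<nu> x :: real
  assumes "1 < a" "1 \<le> \<nu>" "0 \<le> x"
  shows "(1 + x\<^sup>2) * exp (- \<nu> * x) * x powr (a - 1)
           \<le> ((a - 1) powr (a - 1) + (a + 1) powr (a + 1)) * \<nu> powr (1 - a)"
proof -
  have "x\<^sup>2 * x powr (a - 1) = x powr (a + 1)"
    using assms powr_add[of x 2 "a - 1"] by (cases "x = 0") (auto simp: powr_realpow add.commute)
  then have "(1 + x\<^sup>2) * exp (- \<nu> * x) * x powr (a - 1)
      = x powr (a - 1) * exp (- \<nu> * x) + x powr (a + 1) * exp (- \<nu> * x)"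
    by (simp add: algebra_simps)
  also have "\<dots> \<le> ((a - 1) / \<nu>) powr (a - 1) + ((a + 1) / \<nu>) powr (a + 1)"
    using assms by (intro add_mono powr_mult_exp_le) auto
  also have "\<dots> = (a - 1) powr (a - 1) / \<nu> powr (a - 1) + (a + 1) powr (a + 1) / \<nu> powr (a + 1)"
    using assms by (simp add: powr_divide)
  also have "\<dots> \<le> (a - 1) powr (a - 1) / \<nu> powr (a - 1) + (a + 1) powr (a + 1) / \<nu> powr (a - 1)"
    using assms by (intro add_mono divide_left_mono powr_mono) auto
  also have "\<dots> = ((a - 1) powr (a - 1) + (a + 1) powr (a + 1)) * \<nu> powr (1 - a)"
    using powr_minus_divide[of \<nu> "a - 1"] by (simp add: add_divide_distrib)
  finally show ?thesis .
qed

(* Since 0 powr (a - 1) = 0, the hypothesis at p = 0 says G 0 t = 0. *)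
lemma norm_nu_le:
  assumes "0 < \<phi>" "0 \<le> T" "1 < a" "1 \<le> \<nu>" "0 \<le> C"
    and bound: "\<And>p t. p \<in> closure (Sphi \<phi>) \<Longrightarrow> t \<in> {0..T} \<Longrightarrow> norm (G p t) \<le> C * norm p powr (a - 1)"
  shows "norm_nu \<phi> T \<nu> G \<le> \<bar>M0\<bar> * C * ((a - 1) powr (a - 1) + (a + 1) powr (a + 1)) * \<nu> powr (1 - a)"
proof -
  define S where "S = {(1 + (norm p)\<^sup>2) * exp (- \<nu> * norm p) * norm (G p t)
                       | p t. p \<in> closure (Sphi \<phi>) \<and> t \<in> {0..T}}"
  define U where "U = C * ((a - 1) powr (a - 1) + (a + 1) powr (a + 1)) * \<nu> powr (1 - a)"
  have S_bounds: "0 \<le> y \<and> y \<le> U" if y_in: "y \<in> S" for y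
  proof -
    obtain p t where y: "y = (1 + (norm p)\<^sup>2) * exp (- \<nu> * norm p) * norm (G p t)"
      and "p \<in> closure (Sphi \<phi>)" "t \<in> {0..T}"
      using y_in unfolding S_def by blast
    have "y \<le> (1 + (norm p)\<^sup>2) * exp (- \<nu> * norm p) * (C * norm p powr (a - 1))"
      unfolding y using bound \<open>p \<in> closure (Sphi \<phi>)\<close> \<open>t \<in> {0..T}\<close> by (intro mult_left_mono) auto
    also have "\<dots> = C * ((1 + (norm p)\<^sup>2) * exp (- \<nu> * norm p) * norm p powr (a - 1))"
      by (simp only: mult_ac)
    also have "\<dots> \<le> U"
      unfolding U_def mult.assoc[of C]
      by (rule mult_left_mono[OF one_plus_square_mult_exp_mult_powr_le]) (use assms in auto)
    finally show ?thesis by (simp add: y)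
  qed
  have "1 \<in> Sphi \<phi>" using assms by (simp add: Sphi_def)
  then have "1 \<in> closure (Sphi \<phi>)" using closure_subset by blast
  moreover have "0 \<in> {0..T}" using assms by simp
  ultimately have witness: "(1 + (norm (1::complex))\<^sup>2) * exp (- \<nu> * norm (1::complex)) * norm (G 1 0) \<in> S"
    unfolding S_def by blast
  have "bdd_above S" unfolding bdd_above_def using S_bounds by blast
  then have "S \<noteq> {}" "0 \<le> Sup S"
    using witness S_bounds[OF witness] by (auto intro: cSup_upper2)
  moreover have "Sup S \<le> U"
    using \<open>S \<noteq> {}\<close> S_bounds by (intro cSup_least) auto
  ultimately have "M0 * Sup S \<le> \<bar>M0\<bar> * U"
    by (metis abs_ge_self abs_ge_zero mult_mono)
  then show ?thesis by (simp add: norm_nu_def S_def U_def mult.assoc)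
qed

theorem lemma23:
  fixes \<phi> \<phi>' \<beta> \<delta> c :: real
  assumes "0 < \<phi>" and "\<phi> < \<phi>'" and "\<phi>' < pi / 6"
    and "c > 0"
    and "\<beta> > 0" and "2/3 * \<beta> + \<delta> > 0"
  shows "(\<exists>C. \<forall>T>0. \<forall>p\<in>Sphi \<phi>. \<forall>t\<in>{0..T}.
            cmod (invLap c \<phi>' (gfun \<beta> \<delta>) p t) \<le> C * cmod p powr (2/3 * \<beta> + \<delta> - 1))
       \<and> (2/3 * \<beta> + \<delta> > 1 \<longrightarrow>
            (\<exists>C. \<forall>T>0. \<forall>\<nu>>1.
               norm_nu \<phi> T \<nu> (invLap c \<phi>' (gfun \<beta> \<delta>)) \<le> C * \<nu> powr (- 2/3 * \<beta> - \<delta> + 1)))"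
proof -
  define a where "a = 2/3 * \<beta> + \<delta>"
  define C where "C = exp 1 * gfun_const \<beta> * cos \<phi>' powr (- a) / (pi * sin (\<phi>' - \<phi>))"
  have "0 < sin (\<phi>' - \<phi>)" by (intro sin_gt_zero) (use assms pi_gt_zero in linarith)+
  then have "0 \<le> C" using gfun_const_pos[of \<beta>] by (simp add: C_def)
  have bound: "norm (invLap c \<phi>' (gfun \<beta> \<delta>) p t) \<le> C * norm p powr (a - 1)"
    if "p \<in> closure (Sphi \<phi>)" "0 \<le> t" "p \<noteq> 0 \<or> 1 < a" for p t
    using norm_invLap_gfun_le_on_closure_Sphi[of \<phi> \<phi>' c t \<beta> \<delta> p] assms that
    unfolding C_def a_def by simp
  have "\<forall>T>0. \<forall>p\<in>Sphi \<phi>. \<forall>t\<in>{0..T}. norm (invLap c \<phi>' (gfun \<beta> \<delta>) p t) \<le> C * norm p powr (a - 1)"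
    using bound closure_subset[of "Sphi \<phi>"] by (auto simp: Sphi_def[of \<phi>])
  moreover have "\<exists>C'. \<forall>T>0. \<forall>\<nu>>1. norm_nu \<phi> T \<nu> (invLap c \<phi>' (gfun \<beta> \<delta>)) \<le> C' * \<nu> powr (1 - a)"
    if "1 < a"
    using that assms \<open>0 \<le> C\<close> bound
    by (intro exI[of _ "\<bar>M0\<bar> * C * ((a - 1) powr (a - 1) + (a + 1) powr (a + 1))"] allI impI norm_nu_le) auto
  moreover have "- 2/3 * \<beta> - \<delta> + 1 = 1 - a" by (simp add: a_def)
  ultimately show ?thesis unfolding a_def[symmetric] by auto
qed

end
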